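(* Let $n\ge 1$ and let $X_1,\dots,X_n$ be positive random variables that are jointly continuously distributed, such that each $X_k$ has an absolutely continuous distribution function $F_k$. Let $s>0$ and let $t=t(n,s)>0$ be the unique solution of $$\sum_{k=1}^n \int_0^{t} x\, dF_k(x) = s.$$ Let $N(n,s)$ and $S_{A(n,s)}$ be as defined in the context. Then $$\mathrm E(N(n,s)) \le \sum_{k=1}^n F_k(t(n,s)) - \frac{s-\mathrm E(S_{A(n,s)})}{t(n,s)}.$$
   Context: Define a total order on $\{X_1,\dots,X_n\}$ by $X_i\prec X_j$ if either $X_i<X_j$, or $X_i=X_j$ and $i<j$. Let $\pi$ be the unique permutation of $\{1,\dots,n\}$ with $X_{\pi(1)}\prec X_{\pi(2)}\prec\cdots\prec X_{\pi(n)}$. Let $A(n,s)=\{\pi(1),\dots,\pi(k)\}$ where $k$ is the largest integer in $\{0,1,\dots,n\}$ with $X_{\pi(1)}+\cdots+X_{\pi(k)}\le s$ (so $A(n,s)=\emptyset$ if $X_{\pi(1)}>s$). Then $N(n,s)=|A(n,s)|$ is the maximum number of observations among $X_1,\dots,X_n$ whose sum does not exceed $s$, and $S_{A(n,s)}=\sum_{i\in A(n,s)} X_i$. *)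

theory Defs
  imports "HOL-Probability.Probability"
begin

definition abs_cont_on_interval :: "real \<Rightarrow> real \<Rightarrow> (real \<Rightarrow> real) \<Rightarrow> bool" where
  "abs_cont_on_interval a b F \<longleftrightarrow>
     (\<forall>\<epsilon>>0. \<exists>\<delta>>0. \<forall>(m::nat) (l::nat \<Rightarrow> real) (u::nat \<Rightarrow> real).
        (\<forall>i<m. a \<le> l i \<and> l i \<le> u i \<and> u i \<le> b) \<and>
        (\<forall>i<m. \<forall>j<m. i \<noteq> j \<longrightarrow> u i \<le> l j \<or> u j \<le> l i) \<and>
        (\<Sum>i<m. u i - l i) < \<delta>
        \<longrightarrow> (\<Sum>i<m. \<bar>F (u i) - F (l i)\<bar>) < \<epsilon>)"

definition abs_cont_fun :: "(real \<Rightarrow> real) \<Rightarrow> bool" where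
  "abs_cont_fun F \<longleftrightarrow> (\<forall>a b. abs_cont_on_interval a b F)"

definition prec_ord :: "(nat \<Rightarrow> real) \<Rightarrow> nat \<Rightarrow> nat \<Rightarrow> bool" where
  "prec_ord x i j \<longleftrightarrow> x i < x j \<or> (x i = x j \<and> i < j)"

definition sort_perm :: "nat \<Rightarrow> (nat \<Rightarrow> real) \<Rightarrow> nat \<Rightarrow> nat" where
  "sort_perm n x = (THE \<pi>. \<pi> permutes {1..n} \<and>
      (\<forall>i j. 1 \<le> i \<and> i < j \<and> j \<le> n \<longrightarrow> prec_ord x (\<pi> i) (\<pi> j)))"

definition greedy_k :: "nat \<Rightarrow> real \<Rightarrow> (nat \<Rightarrow> real) \<Rightarrow> nat" where
  "greedy_k n s x = (GREATEST k. k \<le> n \<and> (\<Sum>i=1..k. x (sort_perm n x i)) \<le> s)"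

definition greedy_set :: "nat \<Rightarrow> real \<Rightarrow> (nat \<Rightarrow> real) \<Rightarrow> nat set" where
  "greedy_set n s x = sort_perm n x ` {1..greedy_k n s x}"

end

theory Submission
  imports Defs
begin

text \<open>With N = card A(n,s) and S = S_A(n,s), pointwise
  N - S/t = \<Sum>k\<in>A(n,s). (1 - X k / t) \<le> \<Sum>k=1..n. max 0 (1 - X k / t),
  and for X k > 0 the expectation of max 0 (1 - X k / t) is F k t - I k / t, where
  I k is the integral of x dF k over [0, t].
  Summing over k and using the equation defining t gives E N - E S / t \<le> \<Sum>k F k t - s / t.
  Only A(n,s) \<subseteq> {1..n}, S \<le> s and the measurability of A(n,s) enter.\<close>

definition prec_sorted :: "nat \<Rightarrow> (nat \<Rightarrow> real) \<Rightarrow> (nat \<Rightarrow> nat) \<Rightarrow> bool" where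
  "prec_sorted n x \<pi> \<longleftrightarrow> (\<forall>i j. 1 \<le> i \<and> i < j \<and> j \<le> n \<longrightarrow> prec_ord x (\<pi> i) (\<pi> j))"

lemma prec_ord_irrefl: "\<not> prec_ord x i i"
  by (auto simp: prec_ord_def)

lemma prec_ord_trans: "prec_ord x i j \<Longrightarrow> prec_ord x j k \<Longrightarrow> prec_ord x i k"
  by (auto simp: prec_ord_def)

lemma prec_ord_total: "i \<noteq> j \<Longrightarrow> prec_ord x i j \<or> prec_ord x j i"
  by (auto simp: prec_ord_def)

definition prec_rank :: "nat \<Rightarrow> (nat \<Rightarrow> real) \<Rightarrow> nat \<Rightarrow> nat" where
  "prec_rank n x i = Suc (card {j \<in> {1..n}. prec_ord x j i})"

lemma prec_rank_less:
  assumes "prec_ord x a b" "a \<in> {1..n}"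
  shows "prec_rank n x a < prec_rank n x b"
proof -
  have "{j \<in> {1..n}. prec_ord x j a} \<subset> {j \<in> {1..n}. prec_ord x j b}"
    using assms prec_ord_trans[OF _ assms(1)] prec_ord_irrefl[of x a] by blast
  then show ?thesis
    unfolding prec_rank_def by (simp add: psubset_card_mono)
qed

lemma prec_rank_bij: "bij_betw (prec_rank n x) {1..n} {1..n}"
proof -
  have inj: "inj_on (prec_rank n x) {1..n}"
  proof (rule inj_onI)
    fix a b assume ab: "a \<in> {1..n}" "b \<in> {1..n}" "prec_rank n x a = prec_rank n x b"
    show "a = b"
    proof (rule ccontr)
      assume "a \<noteq> b"
      then consider "prec_ord x a b" | "prec_ord x b a"
        using prec_ord_total by blast
      then show False
        using prec_rank_less[of x a b n] prec_rank_less[of x b a n] ab by cases simp_all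
    qed
  qed
  have "prec_rank n x i \<in> {1..n}" if "i \<in> {1..n}" for i
  proof -
    have "{j \<in> {1..n}. prec_ord x j i} \<subset> {1..n}"
      using that prec_ord_irrefl[of x i] by blast
    then have "card {j \<in> {1..n}. prec_ord x j i} < n"
      using psubset_card_mono[of "{1..n}"] by simp
    then show ?thesis
      unfolding prec_rank_def by simp
  qed
  then have "prec_rank n x ` {1..n} = {1..n}"
    using inj by (intro card_subset_eq) (auto simp: card_image)
  with inj show ?thesis
    by (simp add: bij_betw_def)
qed

lemma prec_rank_sorted:
  assumes \<pi>: "\<pi> permutes {1..n}" and sorted: "prec_sorted n x \<pi>" and i: "i \<in> {1..n}"
  shows "prec_rank n x (\<pi> i) = i"
proof -
  have "{j \<in> {1..n}. prec_ord x j (\<pi> i)} = \<pi> ` {1..<i}"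
  proof (intro equalityI subsetI)
    fix j assume j: "j \<in> {j \<in> {1..n}. prec_ord x j (\<pi> i)}"
    then obtain l where l: "l \<in> {1..n}" "j = \<pi> l"
      using permutes_image[OF \<pi>] by blast
    have "l < i"
    proof (rule ccontr)
      assume "\<not> l < i"
      then consider "l = i" | "i < l" by linarith
      then show False
      proof cases
        case 1
        then show False using j l(2) prec_ord_irrefl[of x "\<pi> i"] by simp
      next
        case 2
        then have "prec_ord x (\<pi> i) (\<pi> l)"
          using sorted i l unfolding prec_sorted_def by auto
        moreover have "prec_ord x (\<pi> l) (\<pi> i)"
          using j l(2) by simp
        ultimately show False
          using prec_ord_irrefl prec_ord_trans by metis
      qed
    qed
    with l show "j \<in> \<pi> ` {1..<i}"
      by (intro rev_image_eqI[of l]) auto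
  next
    fix j assume "j \<in> \<pi> ` {1..<i}"
    then obtain l where l: "l \<in> {1..<i}" "j = \<pi> l"
      by blast
    then have "j \<in> {1..n}"
      using i permutes_in_image[OF \<pi>] by auto
    then show "j \<in> {j \<in> {1..n}. prec_ord x j (\<pi> i)}"
      using sorted i l unfolding prec_sorted_def by auto
  qed
  moreover have "inj_on \<pi> {1..<i}"
    using permutes_inj[OF \<pi>] by (rule inj_on_subset) simp
  ultimately show ?thesis
    using i unfolding prec_rank_def by (simp add: card_image)
qed

lemma prec_sorted_exists: "\<exists>\<pi>. \<pi> permutes {1..n} \<and> prec_sorted n x \<pi>"
proof -
  define \<pi> where "\<pi> i = (if i \<in> {1..n} then inv_into {1..n} (prec_rank n x) i else i)" for i
  have "bij_betw \<pi> {1..n} {1..n}"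
    using bij_betw_inv_into[OF prec_rank_bij]
    by (rule bij_betw_cong[THEN iffD1, rotated]) (simp add: \<pi>_def)
  then have \<pi>: "\<pi> permutes {1..n}"
    by (rule bij_imp_permutes) (auto simp: \<pi>_def)
  have rank: "prec_rank n x (\<pi> i) = i" if "i \<in> {1..n}" for i
    using bij_betw_inv_into_right[OF prec_rank_bij that] that by (simp add: \<pi>_def)
  have "prec_sorted n x \<pi>"
    unfolding prec_sorted_def
  proof (intro allI impI)
    fix i j assume ij: "1 \<le> i \<and> i < j \<and> j \<le> n"
    then have i: "i \<in> {1..n}" and j: "j \<in> {1..n}"
      by auto
    have "\<pi> i \<noteq> \<pi> j"
      using rank[OF i] rank[OF j] ij by (metis less_irrefl)
    moreover have "\<not> prec_ord x (\<pi> j) (\<pi> i)"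
    proof
      assume "prec_ord x (\<pi> j) (\<pi> i)"
      moreover have "\<pi> j \<in> {1..n}"
        using permutes_in_image[OF \<pi>] j by blast
      ultimately have "prec_rank n x (\<pi> j) < prec_rank n x (\<pi> i)"
        by (rule prec_rank_less)
      with ij show False
        by (simp add: rank[OF i] rank[OF j])
    qed
    ultimately show "prec_ord x (\<pi> i) (\<pi> j)"
      using prec_ord_total by blast
  qed
  with \<pi> show ?thesis by blast
qed

lemma prec_sorted_unique:
  assumes "\<pi> permutes {1..n}" "prec_sorted n x \<pi>" "\<sigma> permutes {1..n}" "prec_sorted n x \<sigma>"
  shows "\<pi> = \<sigma>"
proof
  fix i
  show "\<pi> i = \<sigma> i"
  proof (cases "i \<in> {1..n}")
    case True
    then have "prec_rank n x (\<pi> i) = prec_rank n x (\<sigma> i)"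
      using prec_rank_sorted assms by simp
    moreover have "\<pi> i \<in> {1..n}" "\<sigma> i \<in> {1..n}"
      using True permutes_in_image[OF assms(1)] permutes_in_image[OF assms(3)] by blast+
    ultimately show ?thesis
      by (rule inj_onD[OF bij_betw_imp_inj_on[OF prec_rank_bij]])
  next
    case False
    then show ?thesis
      using assms by (simp add: permutes_not_in)
  qed
qed

lemma sort_perm_eq_iff: "sort_perm n x = \<pi> \<longleftrightarrow> \<pi> permutes {1..n} \<and> prec_sorted n x \<pi>"
proof -
  have unique: "\<exists>!\<pi>. \<pi> permutes {1..n} \<and> prec_sorted n x \<pi>"
    using prec_sorted_exists prec_sorted_unique by blast
  have "sort_perm n x = (THE \<pi>. \<pi> permutes {1..n} \<and> prec_sorted n x \<pi>)"
    unfolding sort_perm_def prec_sorted_def ..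
  then show ?thesis
    using theI'[OF unique] the1_equality[OF unique] by metis
qed

lemma permutes_sort_perm: "sort_perm n x permutes {1..n}"
  and prec_sorted_sort_perm: "prec_sorted n x (sort_perm n x)"
  using sort_perm_eq_iff by blast+

lemma sort_perm_cong:
  assumes "\<And>k. k \<in> {1..n} \<Longrightarrow> x k = y k"
  shows "sort_perm n x = sort_perm n y"
proof -
  let ?\<pi> = "sort_perm n y"
  have "prec_ord x (?\<pi> i) (?\<pi> j) = prec_ord y (?\<pi> i) (?\<pi> j)" if "i \<in> {1..n}" "j \<in> {1..n}" for i j
    using that assms permutes_in_image[OF permutes_sort_perm] by (simp add: prec_ord_def)
  then have "prec_sorted n x ?\<pi>"
    using prec_sorted_sort_perm[of n y] unfolding prec_sorted_def by auto
  then show ?thesis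
    using permutes_sort_perm sort_perm_eq_iff by blast
qed

lemma greedy_k_eq_iff:
  assumes "s \<ge> 0"
  shows "greedy_k n s x = m \<longleftrightarrow> m \<le> n \<and> (\<Sum>i=1..m. x (sort_perm n x i)) \<le> s \<and>
           (\<forall>k\<in>{m<..n}. s < (\<Sum>i=1..k. x (sort_perm n x i)))"
proof -
  let ?P = "\<lambda>k. k \<le> n \<and> (\<Sum>i=1..k. x (sort_perm n x i)) \<le> s"
  have "?P 0"
    using assms by simp
  then have "?P (greedy_k n s x)"
    unfolding greedy_k_def by (rule GreatestI_nat) auto
  moreover have "s < (\<Sum>i=1..k. x (sort_perm n x i))" if "greedy_k n s x < k" "k \<le> n" for k
  proof (rule ccontr)
    assume "\<not> s < (\<Sum>i=1..k. x (sort_perm n x i))"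
    with \<open>k \<le> n\<close> have "k \<le> greedy_k n s x"
      unfolding greedy_k_def by (intro Greatest_le_nat[where b=n]) auto
    with \<open>greedy_k n s x < k\<close> show False
      by simp
  qed
  moreover have "greedy_k n s x = m" if "?P m" "\<forall>k\<in>{m<..n}. \<not> ?P k"
    unfolding greedy_k_def using that by (intro Greatest_equality) (auto simp: not_less[symmetric])
  ultimately show ?thesis
    by (auto simp: not_le)
qed

lemma greedy_set_subset: "s \<ge> 0 \<Longrightarrow> greedy_set n s x \<subseteq> {1..n}"
  using greedy_k_eq_iff[of s n x "greedy_k n s x"] permutes_in_image[OF permutes_sort_perm]
  unfolding greedy_set_def by auto

lemma sum_greedy_set_le:
  assumes "s \<ge> 0"
  shows "(\<Sum>i\<in>greedy_set n s x. x i) \<le> s"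
proof -
  have "inj_on (sort_perm n x) {1..greedy_k n s x}"
    using permutes_inj[OF permutes_sort_perm] by (rule inj_on_subset) simp
  then show ?thesis
    using greedy_k_eq_iff[OF assms, of n x "greedy_k n s x"]
    unfolding greedy_set_def by (simp add: sum.reindex)
qed

lemma greedy_set_cong:
  assumes "\<And>k. k \<in> {1..n} \<Longrightarrow> x k = y k"
  shows "greedy_set n s x = greedy_set n s y"
proof -
  have \<pi>: "sort_perm n x = sort_perm n y"
    using assms by (rule sort_perm_cong)
  have "(\<Sum>i=1..k. x (sort_perm n x i)) = (\<Sum>i=1..k. y (sort_perm n y i))" if "k \<le> n" for k
    unfolding \<pi> using that assms permutes_in_image[OF permutes_sort_perm] by (intro sum.cong) auto
  then have "(\<lambda>k. k \<le> n \<and> (\<Sum>i=1..k. x (sort_perm n x i)) \<le> s)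
      = (\<lambda>k. k \<le> n \<and> (\<Sum>i=1..k. y (sort_perm n y i)) \<le> s)"
    by auto
  then have "greedy_k n s x = greedy_k n s y"
    unfolding greedy_k_def by simp
  then show ?thesis
    unfolding greedy_set_def \<pi> by simp
qed

lemma greedy_set_eq_iff:
  assumes "s \<ge> 0"
  shows "greedy_set n s x = B \<longleftrightarrow>
    (\<exists>\<pi>\<in>{\<pi>. \<pi> permutes {1..n}}. \<exists>m\<in>{0..n}. prec_sorted n x \<pi> \<and> (\<Sum>i=1..m. x (\<pi> i)) \<le> s \<and>
       (\<forall>k\<in>{m<..n}. s < (\<Sum>i=1..k. x (\<pi> i))) \<and> \<pi> ` {1..m} = B)"
    (is "_ \<longleftrightarrow> (\<exists>\<pi>\<in>_. \<exists>m\<in>_. ?greedy \<pi> m)")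
proof
  assume "greedy_set n s x = B"
  then have "?greedy (sort_perm n x) (greedy_k n s x)"
    using greedy_k_eq_iff[OF assms, of n x "greedy_k n s x"] prec_sorted_sort_perm
    unfolding greedy_set_def by simp
  moreover have "sort_perm n x \<in> {\<pi>. \<pi> permutes {1..n}}" "greedy_k n s x \<in> {0..n}"
    using permutes_sort_perm greedy_k_eq_iff[OF assms, of n x "greedy_k n s x"] by auto
  ultimately show "\<exists>\<pi>\<in>{\<pi>. \<pi> permutes {1..n}}. \<exists>m\<in>{0..n}. ?greedy \<pi> m"
    by blast
next
  assume "\<exists>\<pi>\<in>{\<pi>. \<pi> permutes {1..n}}. \<exists>m\<in>{0..n}. ?greedy \<pi> m"
  then obtain \<pi> m where "\<pi> permutes {1..n}" "m \<le> n" "?greedy \<pi> m"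
    by auto
  moreover from this have "sort_perm n x = \<pi>"
    using sort_perm_eq_iff by blast
  ultimately show "greedy_set n s x = B"
    using greedy_k_eq_iff[OF assms, of n x m] unfolding greedy_set_def by auto
qed

lemma measurable_greedy_set:
  assumes s: "s \<ge> 0" and X: "\<And>k. k \<in> {1..n} \<Longrightarrow> X k \<in> borel_measurable M"
  shows "(\<lambda>\<omega>. greedy_set n s (\<lambda>k. X k \<omega>)) \<in> M \<rightarrow>\<^sub>M count_space (Pow {1..n})"
proof -
  \<comment> \<open>the characterisation below evaluates X at indices \<pi> i, so X must be measurable at every index\<close>
  define Y where "Y k \<omega> = (if k \<in> {1..n} then X k \<omega> else 0)" for k \<omega>
  have [measurable]: "Y k \<in> borel_measurable M" for k
    using X unfolding Y_def by (cases "k \<in> {1..n}") auto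
  have [measurable]: "finite {\<pi>. \<pi> permutes {1..n}}"
    by (rule finite_permutations) simp
  have greedy_Y: "greedy_set n s (\<lambda>k. X k \<omega>) = greedy_set n s (\<lambda>k. Y k \<omega>)" for \<omega>
    by (rule greedy_set_cong) (simp add: Y_def)
  have "{\<omega> \<in> space M. greedy_set n s (\<lambda>k. Y k \<omega>) = B} \<in> sets M" for B
    unfolding greedy_set_eq_iff[OF s] prec_sorted_def prec_ord_def by measurable
  moreover have "(\<lambda>\<omega>. greedy_set n s (\<lambda>k. Y k \<omega>)) -` {B} \<inter> space M
      = {\<omega> \<in> space M. greedy_set n s (\<lambda>k. Y k \<omega>) = B}" for B
    by auto
  ultimately show ?thesis
    unfolding greedy_Y using greedy_set_subset[OF s]
    by (subst measurable_count_space_eq2) auto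
qed

lemma card_minus_sum_div_le:
  fixes x :: "'i \<Rightarrow> real"
  assumes "finite I" "A \<subseteq> I"
  shows "real (card A) - (\<Sum>k\<in>A. x k) / t \<le> (\<Sum>k\<in>I. max 0 (1 - x k / t))"
proof -
  have "real (card A) - (\<Sum>k\<in>A. x k) / t = (\<Sum>k\<in>A. 1 - x k / t)"
    by (simp add: sum_subtractf sum_divide_distrib)
  also have "\<dots> \<le> (\<Sum>k\<in>A. max 0 (1 - x k / t))"
    by (intro sum_mono) simp
  also have "\<dots> \<le> (\<Sum>k\<in>I. max 0 (1 - x k / t))"
    using assms by (intro sum_mono2) auto
  finally show ?thesis .
qed

lemma (in prob_space) expectation_max_one_minus_div:
  assumes X [measurable]: "X \<in> borel_measurable M"
    and X_nonneg: "\<And>\<omega>. \<omega> \<in> space M \<Longrightarrow> X \<omega> \<ge> 0" and t: "t > 0"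
  shows "expectation (\<lambda>\<omega>. max 0 (1 - X \<omega> / t))
           = prob {\<omega> \<in> space M. X \<omega> \<le> t} - (LINT x:{0..t}|distr M borel X. x) / t"
proof -
  define T where "T \<omega> = indicator {0..t} (X \<omega>) * X \<omega>" for \<omega>
  have T_int: "integrable M T"
    using t unfolding T_def by (intro integrable_const_bound[where B=t]) (auto simp: indicator_def)
  have P_int: "integrable M (indicator {\<omega> \<in> space M. X \<omega> \<le> t} :: 'a \<Rightarrow> real)"
    by (auto simp: emeasure_eq_measure)
  have "max 0 (1 - X \<omega> / t) = indicator {\<omega> \<in> space M. X \<omega> \<le> t} \<omega> - T \<omega> / t"
    if "\<omega> \<in> space M" for \<omega>
    using X_nonneg[OF that] that t by (auto simp: T_def indicator_def field_simps)
  then have "expectation (\<lambda>\<omega>. max 0 (1 - X \<omega> / t))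
      = prob {\<omega> \<in> space M. X \<omega> \<le> t} - expectation T / t"
    using T_int P_int by (simp cong: Bochner_Integration.integral_cong)
  moreover have "(LINT x:{0..t}|distr M borel X. x) = expectation T"
    unfolding set_lebesgue_integral_def T_def by (simp add: integral_distr)
  ultimately show ?thesis
    by simp
qed

lemma (in prob_space) expectation_card_minus_sum_div_le:
  fixes X :: "'i \<Rightarrow> 'a \<Rightarrow> real" and A :: "'a \<Rightarrow> 'i set"
  assumes I: "finite I"
    and X_meas: "\<And>k. k \<in> I \<Longrightarrow> X k \<in> borel_measurable M"
    and X_nonneg: "\<And>k \<omega>. k \<in> I \<Longrightarrow> \<omega> \<in> space M \<Longrightarrow> X k \<omega> \<ge> 0"
    and A_meas: "A \<in> M \<rightarrow>\<^sub>M count_space (Pow I)"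
    and sum_le: "\<And>\<omega>. \<omega> \<in> space M \<Longrightarrow> (\<Sum>k\<in>A \<omega>. X k \<omega>) \<le> c"
    and t: "t > 0"
  shows "(\<integral>\<omega>. real (card (A \<omega>)) \<partial>M) - (\<integral>\<omega>. (\<Sum>k\<in>A \<omega>. X k \<omega>) \<partial>M) / t
           \<le> (\<Sum>k\<in>I. expectation (\<lambda>\<omega>. max 0 (1 - X k \<omega> / t)))"
proof -
  have A_sub: "A \<omega> \<subseteq> I" if "\<omega> \<in> space M" for \<omega>
    using measurable_space[OF A_meas that] by simp
  have [measurable]: "(\<lambda>\<omega>. h (A \<omega>)) \<in> borel_measurable M" for h :: "'i set \<Rightarrow> real"
    by (rule measurable_compose[OF A_meas]) simp
  have card_int: "integrable M (\<lambda>\<omega>. real (card (A \<omega>)))"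
    by (rule integrable_const_bound[where B="real (card I)"])
       (auto intro: card_mono[OF I] dest: A_sub)
  have sum_eq: "(\<Sum>k\<in>A \<omega>. X k \<omega>) = (\<Sum>k\<in>I. indicator (A \<omega>) k * X k \<omega>)"
    if "\<omega> \<in> space M" for \<omega>
    using A_sub[OF that] I by (intro sum.mono_neutral_cong_left) (auto simp: indicator_def)
  have sum_int: "integrable M (\<lambda>\<omega>. \<Sum>k\<in>A \<omega>. X k \<omega>)"
  proof (rule integrable_const_bound[where B=c])
    show "(\<lambda>\<omega>. \<Sum>k\<in>A \<omega>. X k \<omega>) \<in> borel_measurable M"
      using X_meas by (subst measurable_cong[OF sum_eq]) auto
    have "0 \<le> (\<Sum>k\<in>A \<omega>. X k \<omega>)" if "\<omega> \<in> space M" for \<omega>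
      using A_sub[OF that] X_nonneg[OF _ that] by (intro sum_nonneg) auto
    then show "AE \<omega> in M. norm (\<Sum>k\<in>A \<omega>. X k \<omega>) \<le> c"
      using sum_le by auto
  qed
  have max_int: "integrable M (\<lambda>\<omega>. max 0 (1 - X k \<omega> / t))" if "k \<in> I" for k
    using X_meas[OF that] X_nonneg[OF that] t by (intro integrable_const_bound[where B=1] AE_I2) auto
  have "(\<integral>\<omega>. real (card (A \<omega>)) \<partial>M) - (\<integral>\<omega>. (\<Sum>k\<in>A \<omega>. X k \<omega>) \<partial>M) / t
      = (\<integral>\<omega>. real (card (A \<omega>)) - (\<Sum>k\<in>A \<omega>. X k \<omega>) / t \<partial>M)"
    using card_int sum_int by simp
  also have "\<dots> \<le> (\<integral>\<omega>. (\<Sum>k\<in>I. max 0 (1 - X k \<omega> / t)) \<partial>M)"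
    using card_int sum_int max_int A_sub I
    by (intro integral_mono card_minus_sum_div_le) auto
  also have "\<dots> = (\<Sum>k\<in>I. expectation (\<lambda>\<omega>. max 0 (1 - X k \<omega> / t)))"
    using max_int by (rule Bochner_Integration.integral_sum)
  finally show ?thesis .
qed

theorem theorem3:
  fixes M :: "'a measure" and X :: "nat \<Rightarrow> 'a \<Rightarrow> real"
    and n :: nat and s t :: real and F :: "nat \<Rightarrow> real \<Rightarrow> real"
  assumes M: "prob_space M"
    and n: "n \<ge> 1"
    and meas: "\<And>k. k \<in> {1..n} \<Longrightarrow> X k \<in> borel_measurable M"
    and pos: "\<And>k \<omega>. k \<in> {1..n} \<Longrightarrow> \<omega> \<in> space M \<Longrightarrow> X k \<omega> > 0"
    and joint: "absolutely_continuous (PiM {1..n} (\<lambda>_. lborel))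
                  (distr M (PiM {1..n} (\<lambda>_. borel)) (\<lambda>\<omega>. \<lambda>i\<in>{1..n}. X i \<omega>))"
    and F_def: "\<And>k x. F k x = measure M {\<omega> \<in> space M. X k \<omega> \<le> x}"
    and F_ac: "\<And>k. k \<in> {1..n} \<Longrightarrow> abs_cont_fun (F k)"
    and s: "s > 0"
    and t: "t > 0"
    and t_sol: "(\<Sum>k=1..n. (LINT x:{0..t}|distr M borel (X k). x)) = s"
    and t_unique: "\<And>t'. t' > 0 \<Longrightarrow> (\<Sum>k=1..n. (LINT x:{0..t'}|distr M borel (X k). x)) = s \<Longrightarrow> t' = t"
  shows "(\<integral>\<omega>. real (card (greedy_set n s (\<lambda>k. X k \<omega>))) \<partial>M)
           \<le> (\<Sum>k=1..n. F k t)
              - (s - (\<integral>\<omega>. (\<Sum>i\<in>greedy_set n s (\<lambda>k. X k \<omega>). X i \<omega>) \<partial>M)) / t"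
proof -
  interpret prob_space M
    by (rule M)
  have "s \<ge> 0"
    using s by simp
  then have "(\<integral>\<omega>. real (card (greedy_set n s (\<lambda>k. X k \<omega>))) \<partial>M)
        - (\<integral>\<omega>. (\<Sum>i\<in>greedy_set n s (\<lambda>k. X k \<omega>). X i \<omega>) \<partial>M) / t
      \<le> (\<Sum>k=1..n. expectation (\<lambda>\<omega>. max 0 (1 - X k \<omega> / t)))"
    using meas pos t
    by (intro expectation_card_minus_sum_div_le[where c=s] measurable_greedy_set sum_greedy_set_le)
       (auto intro: less_imp_le)
  also have "\<dots> = (\<Sum>k=1..n. F k t) - s / t"
    using meas pos t t_sol
    by (simp add: expectation_max_one_minus_div less_imp_le F_def sum_subtractf
        sum_divide_distrib[symmetric])
  finally show ?thesis
    by (simp add: diff_divide_distrib)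
qed

end
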